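(* Let $\mathcal{G}$ be a network with non-monitor set $N$ and set of measurement paths $P$. For every integer $k\ge1$, there is a unique maximum-cardinality $k$-identifiable subset $S^*(k)$ of $N$, and $S^*(k+1)\subseteq S^*(k)$.
   Context: $\mathcal{G}$ is a finite connected undirected graph whose node set is partitioned into monitors $M$ and non-monitors $N$; $P$ is an arbitrary set of measurement paths. A failure set is any $F\subseteq N$; a path fails iff it traverses a node of $F$. $P_F$ is the set of paths in $P$ traversing at least one node of $F$; $F_1,F_2$ are distinguishable iff $P_{F_1}\ne P_{F_2}$. $S\subseteq N$ is $k$-identifiable if any two failure sets $F_1,F_2$ with $|F_1|,|F_2|\le k$ and $F_1\cap S\ne F_2\cap S$ are distinguishable. *)

theory Defs
  imports Main
begin

definition connected_graph :: "'v set \<Rightarrow> ('v \<Rightarrow> 'v \<Rightarrow> bool) \<Rightarrow> bool" where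
  "connected_graph V E \<longleftrightarrow>
     (\<forall>u v. E u v \<longrightarrow> u \<in> V \<and> v \<in> V) \<and>
     (\<forall>u v. E u v \<longrightarrow> E v u) \<and> (\<forall>v. \<not> E v v) \<and>
     (\<forall>u\<in>V. \<forall>v\<in>V. E\<^sup>*\<^sup>* u v)"

definition is_graph_path :: "'v set \<Rightarrow> ('v \<Rightarrow> 'v \<Rightarrow> bool) \<Rightarrow> 'v list \<Rightarrow> bool" where
  "is_graph_path V E p \<longleftrightarrow> p \<noteq> [] \<and> set p \<subseteq> V \<and> distinct p \<and>
     (\<forall>i. Suc i < length p \<longrightarrow> E (p ! i) (p ! Suc i))"

definition network :: "'v set \<Rightarrow> ('v \<Rightarrow> 'v \<Rightarrow> bool) \<Rightarrow> 'v set \<Rightarrow> 'v set \<Rightarrow> 'v list set \<Rightarrow> bool" where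
  "network V E M N P \<longleftrightarrow> finite V \<and> connected_graph V E \<and>
     M \<union> N = V \<and> M \<inter> N = {} \<and> (\<forall>p\<in>P. is_graph_path V E p)"

definition failed_paths :: "'v list set \<Rightarrow> 'v set \<Rightarrow> 'v list set" where
  "failed_paths P F = {p \<in> P. set p \<inter> F \<noteq> {}}"

definition distinguishable :: "'v list set \<Rightarrow> 'v set \<Rightarrow> 'v set \<Rightarrow> bool" where
  "distinguishable P F1 F2 \<longleftrightarrow> failed_paths P F1 \<noteq> failed_paths P F2"

definition k_identifiable :: "'v set \<Rightarrow> 'v list set \<Rightarrow> nat \<Rightarrow> 'v set \<Rightarrow> bool" where
  "k_identifiable N P k S \<longleftrightarrow> S \<subseteq> N \<and>
     (\<forall>F1 F2. F1 \<subseteq> N \<and> F2 \<subseteq> N \<and> card F1 \<le> k \<and> card F2 \<le> k \<and>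
        F1 \<inter> S \<noteq> F2 \<inter> S \<longrightarrow> distinguishable P F1 F2)"

definition max_k_identifiable :: "'v set \<Rightarrow> 'v list set \<Rightarrow> nat \<Rightarrow> 'v set \<Rightarrow> bool" where
  "max_k_identifiable N P k S \<longleftrightarrow> k_identifiable N P k S \<and>
     (\<forall>S'. k_identifiable N P k S' \<longrightarrow> card S' \<le> card S)"

end

theory Submission
  imports Defs
begin

text \<open>Two failure sets that differ on a union of sets differ on one of them, so k-identifiability
  is closed under arbitrary unions. Hence the union of all k-identifiable sets is itself
  k-identifiable, and for finite \<open>N\<close> it is the unique one of maximum cardinality. A
  (k+1)-identifiable set is k-identifiable and so lies inside this union.\<close>

definition identifiable_core :: "'v set \<Rightarrow> 'v list set \<Rightarrow> nat \<Rightarrow> 'v set" where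
  "identifiable_core N P k = \<Union>{S. k_identifiable N P k S}"

lemma k_identifiable_Union:
  assumes "\<And>S. S \<in> \<S> \<Longrightarrow> k_identifiable N P k S"
  shows "k_identifiable N P k (\<Union>\<S>)"
  unfolding k_identifiable_def
proof (intro conjI allI impI)
  show "\<Union>\<S> \<subseteq> N" using assms unfolding k_identifiable_def by blast
next
  fix F1 F2
  assume F: "F1 \<subseteq> N \<and> F2 \<subseteq> N \<and> card F1 \<le> k \<and> card F2 \<le> k \<and> F1 \<inter> \<Union>\<S> \<noteq> F2 \<inter> \<Union>\<S>"
  then obtain S where "S \<in> \<S>" and "F1 \<inter> S \<noteq> F2 \<inter> S" by blast
  with F assms show "distinguishable P F1 F2" unfolding k_identifiable_def by blast
qed

lemma k_identifiable_identifiable_core: "k_identifiable N P k (identifiable_core N P k)"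
  unfolding identifiable_core_def by (rule k_identifiable_Union) simp

lemma k_identifiable_subset_core: "k_identifiable N P k S \<Longrightarrow> S \<subseteq> identifiable_core N P k"
  unfolding identifiable_core_def by blast

lemma k_identifiable_antimono: "k \<le> l \<Longrightarrow> k_identifiable N P l S \<Longrightarrow> k_identifiable N P k S"
  unfolding k_identifiable_def by (meson order_trans)

lemma finite_identifiable_core: "finite N \<Longrightarrow> finite (identifiable_core N P k)"
  using k_identifiable_identifiable_core unfolding k_identifiable_def by (meson finite_subset)

lemma max_k_identifiable_iff_core:
  assumes "finite N"
  shows "max_k_identifiable N P k S \<longleftrightarrow> S = identifiable_core N P k"
proof
  assume max: "max_k_identifiable N P k S"
  then have "S \<subseteq> identifiable_core N P k"
    unfolding max_k_identifiable_def by (simp add: k_identifiable_subset_core)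
  moreover have "card (identifiable_core N P k) \<le> card S"
    using max k_identifiable_identifiable_core unfolding max_k_identifiable_def by blast
  ultimately show "S = identifiable_core N P k"
    using finite_identifiable_core[OF assms] by (metis card_seteq)
next
  assume "S = identifiable_core N P k"
  then show "max_k_identifiable N P k S"
    unfolding max_k_identifiable_def
    using k_identifiable_identifiable_core k_identifiable_subset_core
      finite_identifiable_core[OF assms] by (metis card_mono)
qed

theorem corollary2:
  fixes V :: "'v set" and E :: "'v \<Rightarrow> 'v \<Rightarrow> bool" and M N :: "'v set"
    and P :: "'v list set" and k :: nat
  assumes "network V E M N P" and "k \<ge> 1"
  shows "(\<exists>!S. max_k_identifiable N P k S) \<and>
         (\<forall>S T. max_k_identifiable N P k S \<and> max_k_identifiable N P (k + 1) T \<longrightarrow> T \<subseteq> S)"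
proof -
  have "finite N" using assms(1) unfolding network_def by (metis finite_Un)
  note max_iff = max_k_identifiable_iff_core[OF this]
  have "T \<subseteq> identifiable_core N P k" if "max_k_identifiable N P (k + 1) T" for T
  proof -
    have "k_identifiable N P (k + 1) T"
      using that unfolding max_k_identifiable_def by (rule conjunct1)
    then have "k_identifiable N P k T" by (rule k_identifiable_antimono[OF le_add1])
    then show ?thesis by (rule k_identifiable_subset_core)
  qed
  then show ?thesis using max_iff by auto
qed

end
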